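(* Let $\beta_1,\beta_2,\gamma,\rho_1,\rho_2>0$, let $\sigma_1,\sigma_2>0$ with $\sigma_1+\sigma_2=1$, let $\alpha_2\ge 0$, $\alpha_3>0$, and let $0\le u_{\max}<1$. For a point $(s,e,i,j)$ with $s,e,i,j>0$ define \[ \begin{aligned} F(s,e,i,j)=\Bigl\{z=(z_1,\dots,z_5):\ & z_1=-s\bigl(\beta_1(1-u)^2 i+\beta_2(1-u)j\bigr),\\ & z_2=s\bigl(\beta_1(1-u)^2 i+\beta_2(1-u)j\bigr)-\gamma e,\\ & z_3=\sigma_1\gamma e-\rho_1 i,\quad z_4=\sigma_2\gamma e-\rho_2 j,\\ & z_5\ge \alpha_2(e+i+j)+0.5\alpha_3u^2,\ \text{for some } u\in[0,u_{\max}]\Bigr\}\subset\mathbb{R}^5 . \end{aligned} \] Then $F(s,e,i,j)$ is a convex set for every point $(s,e,i,j)$ with positive coordinates. *)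

theory Defs
  imports "HOL-Analysis.Analysis"
begin

definition Fset ::
  "real \<Rightarrow> real \<Rightarrow> real \<Rightarrow> real \<Rightarrow> real \<Rightarrow> real \<Rightarrow> real \<Rightarrow> real \<Rightarrow> real \<Rightarrow> real \<Rightarrow> real \<Rightarrow>
   real \<Rightarrow> real \<Rightarrow> real \<Rightarrow> (real \<times> real \<times> real \<times> real \<times> real) set" where
  "Fset \<beta>1 \<beta>2 \<gamma> \<rho>1 \<rho>2 \<sigma>1 \<sigma>2 \<alpha>2 \<alpha>3 umax s e i j =
     {(z1, z2, z3, z4, z5). \<exists>u\<in>{0..umax}.
        z1 = - s * (\<beta>1 * (1 - u)^2 * i + \<beta>2 * (1 - u) * j) \<and>
        z2 = s * (\<beta>1 * (1 - u)^2 * i + \<beta>2 * (1 - u) * j) - \<gamma> * e \<and>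
        z3 = \<sigma>1 * \<gamma> * e - \<rho>1 * i \<and>
        z4 = \<sigma>2 * \<gamma> * e - \<rho>2 * j \<and>
        z5 \<ge> \<alpha>2 * (e + i + j) + 0.5 * \<alpha>3 * u^2}"

end

theory Submission
  imports Defs
begin

text \<open>The first four coordinates of a point of \<open>F\<close> depend on the control \<open>u\<close> only through
  \<open>g u = \<beta>1 i (1 - u)\<^sup>2 + \<beta>2 j (1 - u)\<close>, so \<open>F\<close> is an affine image of the set of pairs
  \<open>(g u, z)\<close> with \<open>u \<in> [0, umax]\<close> and \<open>z \<ge> \<phi> u\<close>, where \<open>\<phi>\<close> is the running cost. Because \<open>g\<close>
  is convex and decreasing, the intermediate value theorem finds, for any convex combination of
  \<open>g u1\<close> and \<open>g u2\<close>, a control \<open>u\<close> below the same combination of \<open>u1\<close> and \<open>u2\<close> attaining it;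
  as \<open>\<phi>\<close> is increasing and convex, \<open>\<phi> u\<close> stays below the combined cost bound.\<close>

lemma convex_combination_in_interval:
  fixes u1 u2 t :: real
  assumes "u1 \<in> {a..b}" "u2 \<in> {a..b}" "0 \<le> t" "t \<le> 1"
  shows "(1 - t) * u1 + t * u2 \<in> {a..b}"
  using convexD_alt[OF convex_real_interval(5) assms] by simp

lemma convex_antimono_attains_convex_combination:
  fixes g :: "real \<Rightarrow> real"
  assumes g: "continuous_on {a..b} g" "convex_on {a..b} g" "antimono_on {a..b} g"
    and u: "u1 \<in> {a..b}" "u2 \<in> {a..b}" and t: "0 \<le> t" "t \<le> 1"
  obtains u where "u \<in> {a..b}" "u \<le> (1 - t) * u1 + t * u2" "g u = (1 - t) * g u1 + t * g u2"
proof -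
  define m where "m = (1 - t) * u1 + t * u2"
  have m: "m \<in> {a..b}"
    unfolding m_def using u t by (rule convex_combination_in_interval)
  have "g m \<le> (1 - t) * g u1 + t * g u2"
    using convex_onD[OF g(2) t u] by (simp add: m_def)
  moreover have "(1 - t) * g u1 + t * g u2 \<le> g a"
    using u t monotone_onD[OF g(3)] by (intro convex_bound_le) auto
  moreover have "continuous_on {a..m} g"
    using m by (intro continuous_on_subset[OF g(1)]) auto
  ultimately obtain u where "a \<le> u" "u \<le> m" "g u = (1 - t) * g u1 + t * g u2"
    using IVT2'[of g m "(1 - t) * g u1 + t * g u2" a] m by auto
  then show thesis
    using that m unfolding m_def by auto
qed

lemma convex_epigraph_along_antimono_curve:
  fixes g \<phi> :: "real \<Rightarrow> real"
  assumes g: "continuous_on {a..b} g" "convex_on {a..b} g" "antimono_on {a..b} g"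
    and \<phi>: "mono_on {a..b} \<phi>" "convex_on {a..b} \<phi>"
  shows "convex {(g u, z) | u z. u \<in> {a..b} \<and> \<phi> u \<le> z}"
  unfolding convex_alt
proof (clarify)
  fix u1 z1 u2 z2 t :: real
  assume u: "u1 \<in> {a..b}" "u2 \<in> {a..b}" and z: "\<phi> u1 \<le> z1" "\<phi> u2 \<le> z2"
    and t: "0 \<le> t" "t \<le> 1"
  obtain u where u_ab: "u \<in> {a..b}" and u_le: "u \<le> (1 - t) * u1 + t * u2"
    and gu: "g u = (1 - t) * g u1 + t * g u2"
    using convex_antimono_attains_convex_combination[OF g u t] .
  have "\<phi> u \<le> \<phi> ((1 - t) * u1 + t * u2)"
    using u_ab u_le convex_combination_in_interval[OF u t] by (intro monotone_onD[OF \<phi>(1)])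
  also have "\<dots> \<le> (1 - t) * \<phi> u1 + t * \<phi> u2"
    using convex_onD[OF \<phi>(2) t u] by simp
  also have "\<dots> \<le> (1 - t) * z1 + t * z2"
    using z t by (intro add_mono mult_left_mono) auto
  finally show "\<exists>u z. (1 - t) *\<^sub>R (g u1, z1) + t *\<^sub>R (g u2, z2) = (g u, z) \<and> u \<in> {a..b} \<and> \<phi> u \<le> z"
    using gu u_ab by (auto intro!: exI[of _ u])
qed

lemma convex_on_shifted_quadratic:
  fixes p q :: real
  assumes "p \<ge> 0"
  shows "convex_on UNIV (\<lambda>u. p * (1 - u)^2 + q * (1 - u))"
proof (rule f''_ge0_imp_convex)
  show "((\<lambda>u. p * (1 - u)^2 + q * (1 - u)) has_real_derivative 2 * p * (x - 1) - q) (at x)" for x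
    by (auto intro!: derivative_eq_intros simp: algebra_simps)
  show "((\<lambda>u. 2 * p * (u - 1) - q) has_real_derivative 2 * p) (at x)" for x
    by (rule derivative_eq_intros | simp)+
qed (use assms in auto)

lemma antimono_on_shifted_quadratic:
  fixes p q :: real
  assumes "p \<ge> 0" "q \<ge> 0"
  shows "antimono_on {..1} (\<lambda>u. p * (1 - u)^2 + q * (1 - u))"
proof (rule monotone_onI)
  fix u v :: real
  assume "u \<in> {..1}" "v \<in> {..1}" "u \<le> v"
  then have "(1 - v)^2 \<le> (1 - u)^2" "1 - v \<le> 1 - u"
    by (auto intro: power_mono)
  then show "p * (1 - v)^2 + q * (1 - v) \<le> p * (1 - u)^2 + q * (1 - u)"
    using assms by (intro add_mono mult_left_mono)
qed

lemma convex_epigraph_along_shifted_quadratic: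
  fixes p q c k umax :: real
  assumes "p \<ge> 0" "q \<ge> 0" "k \<ge> 0" "umax \<le> 1"
  shows "convex {(p * (1 - u)^2 + q * (1 - u), z) | u z. u \<in> {0..umax} \<and> c + k * u^2 \<le> z}"
proof (rule convex_epigraph_along_antimono_curve)
  show "continuous_on {0..umax} (\<lambda>u. p * (1 - u)^2 + q * (1 - u))"
    by (intro continuous_intros)
  show "convex_on {0..umax} (\<lambda>u. p * (1 - u)^2 + q * (1 - u))"
    using assms by (intro convex_on_subset[OF convex_on_shifted_quadratic]) auto
  show "antimono_on {0..umax} (\<lambda>u. p * (1 - u)^2 + q * (1 - u))"
    using assms by (intro monotone_on_subset[OF antimono_on_shifted_quadratic]) auto
  show "mono_on {0..umax} (\<lambda>u. c + k * u^2)"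
    using assms by (intro monotone_onI) (auto intro: power_mono mult_left_mono)
  show "convex_on {0..umax} (\<lambda>u. c + k * u^2)"
    using assms
    by (intro convex_on_add convex_on_cmul convex_on_subset[OF convex_power_even]) (auto simp: convex_on_const)
qed

theorem lemma2:
  fixes \<beta>1 \<beta>2 \<gamma> \<rho>1 \<rho>2 \<sigma>1 \<sigma>2 \<alpha>2 \<alpha>3 umax :: real
  assumes "\<beta>1 > 0" "\<beta>2 > 0" "\<gamma> > 0" "\<rho>1 > 0" "\<rho>2 > 0"
    and "\<sigma>1 > 0" "\<sigma>2 > 0" "\<sigma>1 + \<sigma>2 = 1"
    and "\<alpha>2 \<ge> 0" "\<alpha>3 > 0"
    and "0 \<le> umax" "umax < 1"
  shows "\<forall>s e i j :: real. s > 0 \<and> e > 0 \<and> i > 0 \<and> j > 0 \<longrightarrow>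
           convex (Fset \<beta>1 \<beta>2 \<gamma> \<rho>1 \<rho>2 \<sigma>1 \<sigma>2 \<alpha>2 \<alpha>3 umax s e i j)"
proof (intro allI impI)
  fix s e i j :: real
  assume pos: "s > 0 \<and> e > 0 \<and> i > 0 \<and> j > 0"
  define L :: "real \<times> real \<Rightarrow> real \<times> real \<times> real \<times> real \<times> real"
    where "L = (\<lambda>(w, z). (- s * w, s * w, 0, 0, z))"
  define c :: "real \<times> real \<times> real \<times> real \<times> real"
    where "c = (0, - \<gamma> * e, \<sigma>1 * \<gamma> * e - \<rho>1 * i, \<sigma>2 * \<gamma> * e - \<rho>2 * j, 0)"
  define S where "S = {(\<beta>1 * i * (1 - u)^2 + \<beta>2 * j * (1 - u), z) | u z.
    u \<in> {0..umax} \<and> \<alpha>2 * (e + i + j) + 0.5 * \<alpha>3 * u^2 \<le> z}"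
  have "convex S"
    unfolding S_def using assms pos by (intro convex_epigraph_along_shifted_quadratic) auto
  moreover have "linear L"
    unfolding L_def by (intro linearI) (auto simp: algebra_simps)
  moreover have "Fset \<beta>1 \<beta>2 \<gamma> \<rho>1 \<rho>2 \<sigma>1 \<sigma>2 \<alpha>2 \<alpha>3 umax s e i j = (+) c ` L ` S"
    unfolding Fset_def S_def L_def c_def by (force simp: image_iff ac_simps)
  ultimately show "convex (Fset \<beta>1 \<beta>2 \<gamma> \<rho>1 \<rho>2 \<sigma>1 \<sigma>2 \<alpha>2 \<alpha>3 umax s e i j)"
    by (simp add: convex_linear_image)
qed

end
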